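(* No maximal ideal $\mathcal{I}$ on $\omega$ with $\mathrm{fin} \subseteq \mathcal{I}$ is uniformly weakly Ramsey.
   Context: $\mathrm{fin}$ is the ideal of finite subsets of $\omega$; $\mathcal{I}^+$ denotes the $\mathcal{I}$-positive sets (subsets of $\omega$ not in $\mathcal{I}$); for $A \subseteq \omega$, $\mathcal{I}|A = \{I \subseteq A : I \in \mathcal{I}\}$, an ideal on $A$, and $(\mathcal{I}|A)^+$ is the family of subsets of $A$ not in $\mathcal{I}$. A coloring is a function $c : [\omega]^2 \to 2$; it is subadditive if $c(\{m,n\}) \le c(\{m,k\}) + c(\{n,k\})$ for all $m<n<k$. A set $H$ is 0-homogeneous for $c$ if $c(\{m,n\}) = 0$ for all distinct $m,n \in H$; $H$ is nowhere 0-homogeneous (with respect to $\mathcal{I}$ and $c$) if every $B \in (\mathcal{I}|H)^+$ contains distinct $m,n$ with $c(\{m,n\}) = 1$. A function $\Phi : [\omega]^\omega \times 2^{[\omega]^2} \to [\omega]^\omega$ witnesses that $\mathcal{I}$ is weakly Ramsey if for every $A \in \mathcal{I}^+$ and every subadditive coloring $c$, $H = \Phi(A,c)$ belongs to $(\mathcal{I}|A)^+$ and is either 0-homogeneous or nowhere 0-homogeneous for $c$. $\mathcal{I}$ is uniformly weakly Ramsey if some Borel function witnesses that $\mathcal{I}$ is weakly Ramsey. *)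

theory Defs
  imports "HOL-Analysis.Analysis"
begin

definition is_ideal :: "nat set set \<Rightarrow> bool" where
  "is_ideal I \<longleftrightarrow> {} \<in> I \<and> UNIV \<notin> I \<and> (\<forall>A\<in>I. \<forall>B. B \<subseteq> A \<longrightarrow> B \<in> I)
     \<and> (\<forall>A\<in>I. \<forall>B\<in>I. A \<union> B \<in> I)"

definition maximal_ideal :: "nat set set \<Rightarrow> bool" where
  "maximal_ideal I \<longleftrightarrow> is_ideal I \<and> (\<forall>J. is_ideal J \<and> I \<subseteq> J \<longrightarrow> J = I)"

text \<open>A coloring c of pairs is coded by c m n for m < n (True = colour 1);
  entries with m >= n are ignored.\<close>
type_synonym coloring = "nat \<Rightarrow> nat \<Rightarrow> bool"

definition subadditive :: "coloring \<Rightarrow> bool" where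
  "subadditive c \<longleftrightarrow> (\<forall>m n k. m < n \<and> n < k \<longrightarrow> c m n \<longrightarrow> c m k \<or> c n k)"

definition zero_homogeneous :: "coloring \<Rightarrow> nat set \<Rightarrow> bool" where
  "zero_homogeneous c H \<longleftrightarrow> (\<forall>m\<in>H. \<forall>n\<in>H. m < n \<longrightarrow> \<not> c m n)"

definition nowhere_zero_homogeneous :: "nat set set \<Rightarrow> coloring \<Rightarrow> nat set \<Rightarrow> bool" where
  "nowhere_zero_homogeneous I c H \<longleftrightarrow>
     (\<forall>B. B \<subseteq> H \<and> B \<notin> I \<longrightarrow> (\<exists>m\<in>B. \<exists>n\<in>B. m < n \<and> c m n))"

definition weakly_Ramsey_witness :: "nat set set \<Rightarrow> (nat set \<times> coloring \<Rightarrow> nat set) \<Rightarrow> bool" where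
  "weakly_Ramsey_witness I \<Phi> \<longleftrightarrow>
     (\<forall>A c. infinite A \<longrightarrow> infinite (\<Phi> (A, c))) \<and>
     (\<forall>A c. A \<notin> I \<and> subadditive c \<longrightarrow>
        \<Phi> (A, c) \<subseteq> A \<and> \<Phi> (A, c) \<notin> I \<and>
        (zero_homogeneous c (\<Phi> (A, c)) \<or> nowhere_zero_homogeneous I c (\<Phi> (A, c))))"

text \<open>Borelness: subsets of omega are identified with points of the Cantor space
  nat => bool (product topology), colorings with points of nat => nat => bool;
  Phi must be Borel measurable on [omega]^omega x 2^(pairs).\<close>
definition uniformly_weakly_Ramsey :: "nat set set \<Rightarrow> bool" where
  "uniformly_weakly_Ramsey I \<longleftrightarrow>
     (\<exists>\<Phi>. weakly_Ramsey_witness I \<Phi> \<and>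
        (\<lambda>(f::nat \<Rightarrow> bool, c::coloring). (\<lambda>n. n \<in> \<Phi> (Collect f, c)))
          \<in> measurable (restrict_space borel {(f, c). infinite (Collect f)}) borel)"

end

theory Submission
  imports Defs "HOL-Probability.Probability"
begin

text \<open>
  Suppose a Borel map \<Phi> witnesses that I is weakly Ramsey. For f \<subseteq> \<omega> the colouring
  c(m, n) = [f m \<noteq> f n] is subadditive, and no I-positive set is nowhere 0-homogeneous for
  it, so H = \<Phi>(\<omega>, c) is an I-positive set on which f is constant. As I is maximal, f is
  I-positive iff f holds somewhere on H, so the set of I-positive sets is Borel in the Cantor
  space. It is invariant under finite modifications (fin \<subseteq> I), hence has measure 0 or 1 for
  the coin-tossing measure by Kolmogorov's zero-one law; but complementation, which preserves
  that measure, maps it onto its complement (I is maximal), so its measure is 1/2.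
\<close>

text \<open>Makes the Borel sets of the product spaces below coincide with the product \<sigma>-algebras.\<close>
instance bool :: second_countable_topology
proof
  show "\<exists>B::bool set set. countable B \<and> open = generate_topology B"
  proof (intro exI[of _ "Pow UNIV"] conjI ext)
    show "open S = generate_topology (Pow UNIV) S" for S :: "bool set"
      by (simp add: Topological_Spaces.open_discrete generate_topology.Basis)
  qed (simp add: countable_finite)
qed

lemma is_ideal_subset: "is_ideal I \<Longrightarrow> A \<in> I \<Longrightarrow> B \<subseteq> A \<Longrightarrow> B \<in> I"
  unfolding is_ideal_def by blast

lemma is_ideal_Un: "is_ideal I \<Longrightarrow> A \<in> I \<Longrightarrow> B \<in> I \<Longrightarrow> A \<union> B \<in> I"
  unfolding is_ideal_def by blast

lemma is_ideal_UNIV: "is_ideal I \<Longrightarrow> UNIV \<notin> I"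
  unfolding is_ideal_def by blast

lemma maximal_ideal_is_ideal: "maximal_ideal I \<Longrightarrow> is_ideal I"
  by (simp add: maximal_ideal_def)

lemma maximal_ideal_mem_or_compl:
  assumes "maximal_ideal I"
  shows "X \<in> I \<or> - X \<in> I"
proof (rule ccontr)
  assume X: "\<not> (X \<in> I \<or> - X \<in> I)"
  have I: "is_ideal I" using maximal_ideal_is_ideal[OF assms] .
  define J where "J = {B. \<exists>C\<in>I. B \<subseteq> X \<union> C}"
  have "is_ideal J"
    unfolding is_ideal_def
  proof (intro conjI ballI allI impI)
    show "{} \<in> J" using I unfolding J_def is_ideal_def by blast
    show "UNIV \<notin> J"
    proof
      assume "UNIV \<in> J"
      then obtain C where "C \<in> I" "- X \<subseteq> C" unfolding J_def by blast
      then show False using X is_ideal_subset[OF I] by blast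
    qed
    show "B \<in> J" if "A \<in> J" "B \<subseteq> A" for A B using that unfolding J_def by blast
    show "A \<union> B \<in> J" if AB: "A \<in> J" "B \<in> J" for A B
    proof -
      obtain C D where "C \<in> I" "D \<in> I" "A \<subseteq> X \<union> C" "B \<subseteq> X \<union> D"
        using AB unfolding J_def by blast
      then show ?thesis using is_ideal_Un[OF I] unfolding J_def by blast
    qed
  qed
  moreover have "I \<subseteq> J" unfolding J_def by blast
  ultimately have "J = I" using assms unfolding maximal_ideal_def by blast
  moreover have "X \<in> J" using I unfolding J_def is_ideal_def by blast
  ultimately show False using X by blast
qed

lemma maximal_ideal_notin_iff_compl:
  assumes "maximal_ideal I"
  shows "A \<notin> I \<longleftrightarrow> - A \<in> I"
proof -
  have "\<not> (A \<in> I \<and> - A \<in> I)"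
    using is_ideal_Un[of I A "- A"] is_ideal_UNIV[of I] maximal_ideal_is_ideal[OF assms] by auto
  then show ?thesis using maximal_ideal_mem_or_compl[OF assms] by blast
qed

lemma ideal_positive_finite_modification:
  assumes "is_ideal I" "{A. finite A} \<subseteq> I" "A \<notin> I" "finite (A - B)"
  shows "B \<notin> I"
proof
  assume "B \<in> I"
  moreover have "A - B \<in> I" using assms(2,4) by blast
  ultimately have "B \<union> (A - B) \<in> I" using assms(1) is_ideal_Un by blast
  then show False using assms(1,3) is_ideal_subset[of I "B \<union> (A - B)" A] by blast
qed

definition split_coloring :: "(nat \<Rightarrow> bool) \<Rightarrow> coloring" where
  "split_coloring f = (\<lambda>m n. f m \<noteq> f n)"

lemma subadditive_split_coloring: "subadditive (split_coloring f)"
  unfolding subadditive_def split_coloring_def by auto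

lemma zero_homogeneous_split_coloring_iff:
  "zero_homogeneous (split_coloring f) H \<longleftrightarrow> (\<forall>m\<in>H. \<forall>n\<in>H. f m = f n)"
  unfolding zero_homogeneous_def split_coloring_def by (metis linorder_neqE_nat)

lemma nowhere_zero_homogeneous_imp_mem:
  assumes "nowhere_zero_homogeneous I c H" "B \<subseteq> H" "zero_homogeneous c B"
  shows "B \<in> I"
  using assms unfolding nowhere_zero_homogeneous_def zero_homogeneous_def by (meson subset_trans)

lemma not_nowhere_zero_homogeneous_split_coloring:
  assumes "is_ideal I" "H \<notin> I"
  shows "\<not> nowhere_zero_homogeneous I (split_coloring f) H"
proof
  assume nowhere: "nowhere_zero_homogeneous I (split_coloring f) H"
  have "H \<inter> P \<in> I" if "zero_homogeneous (split_coloring f) (H \<inter> P)" for P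
    using nowhere_zero_homogeneous_imp_mem[OF nowhere _ that] by blast
  then have "H \<inter> Collect f \<in> I" "H \<inter> - Collect f \<in> I"
    by (simp_all add: zero_homogeneous_split_coloring_iff)
  then have "H \<inter> Collect f \<union> H \<inter> - Collect f \<in> I" using assms(1) is_ideal_Un by blast
  then show False using assms(2) by (simp add: Int_Un_distrib[symmetric])
qed

lemma maximal_ideal_positive_iff_witness:
  assumes "maximal_ideal I" "weakly_Ramsey_witness I \<Phi>"
  shows "Collect f \<notin> I \<longleftrightarrow> (\<exists>n\<in>\<Phi> (UNIV, split_coloring f). f n)"
proof -
  have I: "is_ideal I" using maximal_ideal_is_ideal[OF assms(1)] .
  define H where "H = \<Phi> (UNIV, split_coloring f)"
  have "H \<notin> I" and "zero_homogeneous (split_coloring f) H \<or>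
      nowhere_zero_homogeneous I (split_coloring f) H"
    using assms(2) is_ideal_UNIV[OF I] subadditive_split_coloring
    unfolding weakly_Ramsey_witness_def H_def by blast+
  then have "zero_homogeneous (split_coloring f) H"
    using not_nowhere_zero_homogeneous_split_coloring[OF I] by blast
  then have const: "\<forall>m\<in>H. \<forall>n\<in>H. f m = f n"
    by (simp only: zero_homogeneous_split_coloring_iff)
  show ?thesis
  proof
    assume "Collect f \<notin> I"
    then have "- Collect f \<in> I" using maximal_ideal_notin_iff_compl[OF assms(1)] by simp
    then have "\<not> H \<subseteq> - Collect f" using \<open>H \<notin> I\<close> is_ideal_subset[OF I] by metis
    then show "\<exists>n\<in>\<Phi> (UNIV, split_coloring f). f n" unfolding H_def by blast
  next
    assume "\<exists>n\<in>\<Phi> (UNIV, split_coloring f). f n"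
    then have "H \<subseteq> Collect f" using const unfolding H_def by blast
    then show "Collect f \<notin> I" using \<open>H \<notin> I\<close> is_ideal_subset[OF I] by metis
  qed
qed

lemma measurable_coordinate_count_space [measurable]:
  "(\<lambda>f::nat \<Rightarrow> bool. f i) \<in> measurable borel (count_space UNIV)"
proof -
  have "(\<lambda>f::nat \<Rightarrow> bool. f i) \<in> borel_measurable borel"
    by (intro borel_measurable_continuous_onI continuous_on_product_coordinates)
  then show ?thesis
    by (simp add: measurable_cong_sets[OF refl sets_borel_eq_count_space])
qed

lemma borel_measurable_split_coloring: "split_coloring \<in> borel_measurable borel"
proof (intro measurable_coordinatewise_then_product)
  fix m n
  show "(\<lambda>f. split_coloring f m n) \<in> borel_measurable borel"
    unfolding split_coloring_def
    by (simp add: measurable_cong_sets[OF refl sets_borel_eq_count_space])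
qed

lemma sets_borel_witness_meets:
  assumes "(\<lambda>(f::nat \<Rightarrow> bool, c::coloring). (\<lambda>n. n \<in> \<Phi> (Collect f, c)))
      \<in> measurable (restrict_space borel {(f, c). infinite (Collect f)}) borel"
  shows "{f. \<exists>n\<in>\<Phi> (UNIV, split_coloring f). f n} \<in> sets borel"
proof -
  have "(\<lambda>f::nat \<Rightarrow> bool. (\<lambda>_::nat. True, split_coloring f)) \<in> borel_measurable borel"
    using borel_measurable_split_coloring by (simp add: borel_prod[symmetric])
  then have "(\<lambda>f::nat \<Rightarrow> bool. (\<lambda>_::nat. True, split_coloring f))
      \<in> measurable borel (restrict_space borel {(f, c). infinite (Collect f)})"
    by (intro measurable_restrict_space2) auto
  from measurable_comp[OF this assms]
  have "(\<lambda>f. \<lambda>n. n \<in> \<Phi> (UNIV, split_coloring f)) \<in> borel_measurable borel"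
    by (simp add: o_def)
  from measurable_comp[OF this measurable_coordinate_count_space]
  have [measurable]: "(\<lambda>f. n \<in> \<Phi> (UNIV, split_coloring f)) \<in> measurable borel (count_space UNIV)"
    for n by (simp add: o_def)
  have "{f. \<exists>n\<in>\<Phi> (UNIV, split_coloring f). f n}
      = (\<Union>n. {f. n \<in> \<Phi> (UNIV, split_coloring f) \<and> f n})"
    by blast
  also have "\<dots> \<in> sets borel"
    by measurable
  finally show ?thesis .
qed


definition fair_coin :: "bool measure" where
  "fair_coin = measure_pmf (pmf_of_set UNIV)"

definition coin_tossing :: "(nat \<Rightarrow> bool) measure" where
  "coin_tossing = PiM UNIV (\<lambda>_. fair_coin)"

lemma space_fair_coin [simp]: "space fair_coin = UNIV"
  by (simp add: fair_coin_def)

lemma sets_fair_coin [simp]: "sets fair_coin = UNIV"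
  by (simp add: fair_coin_def)

lemma prob_space_fair_coin: "prob_space fair_coin"
  unfolding fair_coin_def by (rule prob_space_measure_pmf)

lemma distr_fair_coin_Not: "distr fair_coin fair_coin Not = fair_coin"
proof -
  have "distr fair_coin fair_coin Not = distr fair_coin (count_space UNIV) Not"
    by (rule distr_cong) (simp_all add: fair_coin_def)
  also have "\<dots> = measure_pmf (map_pmf Not (pmf_of_set UNIV))"
    by (simp add: fair_coin_def map_pmf_rep_eq)
  also have "map_pmf Not (pmf_of_set UNIV) = pmf_of_set (UNIV :: bool set)"
    by (subst map_pmf_of_set_inj) (auto simp: inj_on_def UNIV_bool insert_commute)
  finally show ?thesis by (simp add: fair_coin_def)
qed

interpretation coin_tossing: prob_space coin_tossing
  unfolding coin_tossing_def by (intro prob_space_PiM prob_space_fair_coin)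

lemma space_coin_tossing [simp]: "space coin_tossing = UNIV"
  by (simp add: coin_tossing_def space_PiM)

lemma sets_coin_tossing: "sets coin_tossing = sets borel"
proof -
  have "sets fair_coin = sets (borel :: bool measure)"
    by (simp add: sets_borel_eq_count_space)
  then show ?thesis
    unfolding coin_tossing_def by (metis sets_PiM_cong sets_PiM_equal_borel)
qed

lemma measurable_coin_tossing_coordinate [measurable]:
  "(\<lambda>f. f i) \<in> measurable coin_tossing fair_coin"
  unfolding coin_tossing_def by (rule measurable_component_singleton) simp

lemma distr_coin_tossing_coordinate: "distr coin_tossing fair_coin (\<lambda>f. f i) = fair_coin"
  unfolding coin_tossing_def by (rule distr_PiM_component) (simp_all add: prob_space_fair_coin)

lemma restrict_UNIV_eq: "(\<lambda>i\<in>UNIV. f i) = f"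
  by (simp add: restrict_def)

lemma coin_tossing_indep_coordinates:
  "coin_tossing.indep_vars (\<lambda>_. fair_coin) (\<lambda>i f. f i) UNIV"
  by (subst coin_tossing.indep_vars_iff_distr_eq_PiM)
    (simp_all add: distr_coin_tossing_coordinate restrict_UNIV_eq coin_tossing_def[symmetric])

lemma measurable_fair_coin_Not: "Not \<in> measurable fair_coin fair_coin"
  by (simp add: measurable_def)

lemma measurable_coin_tossing_flip_coordinate:
  "(\<lambda>f. \<not> f i) \<in> measurable coin_tossing fair_coin"
  by (rule measurable_compose[OF measurable_coin_tossing_coordinate measurable_fair_coin_Not])

lemma measurable_coin_tossing_flip: "(\<lambda>f i. \<not> f i) \<in> measurable coin_tossing coin_tossing"
  by (subst (2) coin_tossing_def, rule measurable_PiM_single')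
    (simp_all add: measurable_coin_tossing_flip_coordinate)

lemma distr_coin_tossing_flip: "distr coin_tossing coin_tossing (\<lambda>f i. \<not> f i) = coin_tossing"
proof -
  have "distr coin_tossing fair_coin (\<lambda>f. \<not> f i) = fair_coin" for i
    using distr_distr[OF measurable_fair_coin_Not measurable_coin_tossing_coordinate]
    by (simp add: comp_def distr_coin_tossing_coordinate distr_fair_coin_Not)
  moreover have "coin_tossing.indep_vars (\<lambda>_. fair_coin) (\<lambda>i f. \<not> f i) UNIV"
    using coin_tossing.indep_vars_compose2[OF coin_tossing_indep_coordinates
        measurable_fair_coin_Not] .
  ultimately show ?thesis
    by (subst (asm) coin_tossing.indep_vars_iff_distr_eq_PiM)
      (simp_all add: measurable_coin_tossing_flip_coordinate restrict_UNIV_eq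
        coin_tossing_def[symmetric])
qed

definition coordinate_events :: "nat \<Rightarrow> (nat \<Rightarrow> bool) set set" where
  "coordinate_events i = sigma_sets UNIV {(\<lambda>f. f i) -` E | E. E \<in> sets fair_coin}"

lemma measurable_clear_prefix:
  "(\<lambda>f i. if i < n then False else f i)
    \<in> measurable (sigma UNIV (\<Union> (coordinate_events ` {n..}))) coin_tossing"
  unfolding coin_tossing_def
proof (rule measurable_PiM_single')
  fix i
  show "(\<lambda>f. if i < n then False else f i)
      \<in> measurable (sigma UNIV (\<Union> (coordinate_events ` {n..}))) fair_coin"
  proof (cases "i < n")
    case False
    then have "(\<lambda>f. f i) -` E \<in> \<Union> (coordinate_events ` {n..})" for E
      unfolding coordinate_events_def by (intro UN_I[of i] sigma_sets.Basic) auto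
    with False show ?thesis
      by (intro measurableI) auto
  qed simp
qed simp

lemma finite_modification_invariant_tail_event:
  fixes S :: "(nat \<Rightarrow> bool) set"
  assumes "S \<in> sets borel" "\<And>f g. finite {i. f i \<noteq> g i} \<Longrightarrow> f \<in> S \<Longrightarrow> g \<in> S"
  shows "S \<in> coin_tossing.tail_events coordinate_events"
  unfolding coin_tossing.tail_events_def
proof (rule INT_I)
  fix n :: nat
  let ?h = "\<lambda>(f :: nat \<Rightarrow> bool) i. if i < n then False else f i"
  have "?h -` S = S"
  proof -
    have fin: "finite {i. ?h f i \<noteq> f i}" "finite {i. f i \<noteq> ?h f i}" for f
      by (auto intro: finite_subset[of _ "{..<n}"])
    have "?h f \<in> S \<longleftrightarrow> f \<in> S" for f
      using assms(2)[OF fin(1)[of f]] assms(2)[OF fin(2)[of f]] by blast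
    then show ?thesis by (simp add: set_eq_iff)
  qed
  moreover have "S \<in> sets coin_tossing" using assms(1) sets_coin_tossing by simp
  then have "?h -` S \<in> sigma_sets UNIV (\<Union> (coordinate_events ` {n..}))"
    using measurable_sets[OF measurable_clear_prefix] by simp
  ultimately show "S \<in> sigma_sets (space coin_tossing) (\<Union> (coordinate_events ` {n..}))"
    by simp
qed

lemma coin_tossing_zero_one_law:
  fixes S :: "(nat \<Rightarrow> bool) set"
  assumes "S \<in> sets borel" "\<And>f g. finite {i. f i \<noteq> g i} \<Longrightarrow> f \<in> S \<Longrightarrow> g \<in> S"
  shows "coin_tossing.prob S = 0 \<or> coin_tossing.prob S = 1"
proof (rule coin_tossing.kolmogorov_0_1_law)
  show "sigma_algebra (space coin_tossing) (coordinate_events i)" for i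
    unfolding coordinate_events_def by (simp add: sigma_algebra_sigma_sets)
  show "coin_tossing.indep_sets coordinate_events UNIV"
    using coin_tossing_indep_coordinates
    unfolding coin_tossing.indep_vars_def coordinate_events_def by simp
  show "S \<in> coin_tossing.tail_events coordinate_events"
    using assms by (rule finite_modification_invariant_tail_event)
qed

lemma no_borel_self_dual_tail_set:
  fixes S :: "(nat \<Rightarrow> bool) set"
  assumes "S \<in> sets borel" "\<And>f g. finite {i. f i \<noteq> g i} \<Longrightarrow> f \<in> S \<Longrightarrow> g \<in> S"
    and "\<And>f. f \<in> S \<longleftrightarrow> (\<lambda>i. \<not> f i) \<notin> S"
  shows False
proof -
  have S: "S \<in> coin_tossing.events" using assms(1) sets_coin_tossing by simp
  have "coin_tossing.prob S = measure (distr coin_tossing coin_tossing (\<lambda>f i. \<not> f i)) S"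
    by (simp add: distr_coin_tossing_flip)
  also have "\<dots> = coin_tossing.prob ((\<lambda>f i. \<not> f i) -` S \<inter> space coin_tossing)"
    by (rule measure_distr[OF measurable_coin_tossing_flip S])
  also have "(\<lambda>f i. \<not> f i) -` S \<inter> space coin_tossing = space coin_tossing - S"
    using assms(3) by auto
  also have "coin_tossing.prob (space coin_tossing - S) = 1 - coin_tossing.prob S"
    by (rule coin_tossing.prob_compl[OF S])
  finally show False
    using coin_tossing_zero_one_law[OF assms(1,2)] by auto
qed

theorem fact4p5:
  fixes I :: "nat set set"
  assumes "maximal_ideal I" and "{A. finite A} \<subseteq> I"
  shows "\<not> uniformly_weakly_Ramsey I"
proof
  assume "uniformly_weakly_Ramsey I"
  then obtain \<Phi> where witness: "weakly_Ramsey_witness I \<Phi>"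
    and Borel: "(\<lambda>(f::nat \<Rightarrow> bool, c::coloring). (\<lambda>n. n \<in> \<Phi> (Collect f, c)))
      \<in> measurable (restrict_space borel {(f, c). infinite (Collect f)}) borel"
    unfolding uniformly_weakly_Ramsey_def by blast
  have ideal: "is_ideal I" using maximal_ideal_is_ideal[OF assms(1)] .
  let ?S = "{f. Collect f \<notin> I}"
  show False
  proof (rule no_borel_self_dual_tail_set)
    show "?S \<in> sets borel"
      using sets_borel_witness_meets[OF Borel]
      by (simp add: maximal_ideal_positive_iff_witness[OF assms(1) witness])
    show "g \<in> ?S" if "finite {i. f i \<noteq> g i}" "f \<in> ?S" for f g
      using ideal_positive_finite_modification[OF ideal assms(2), of "Collect f" "Collect g"] that
        finite_subset[of "Collect f - Collect g" "{i. f i \<noteq> g i}"] by blast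
    show "f \<in> ?S \<longleftrightarrow> (\<lambda>i. \<not> f i) \<notin> ?S" for f
      using maximal_ideal_notin_iff_compl[OF assms(1)] by (simp add: Collect_neg_eq)
  qed
qed

end
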